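(* Let $A$ be an algebra of Jordan type half over a field $\mathbb{F}$ of characteristic zero. If $a,b\in A$ are primitive axes of Jordan type half with $(a,b)=0$, then every non-zero, non-identity idempotent of $J=\langle\langle a,b\rangle\rangle$ is a primitive axis of Jordan type half in $A$; that is, $J$ is solid.
   Context: All algebras are commutative, not necessarily associative; $A_\lambda(x)=\{u\in A:xu=\lambda u\}$. A primitive axis of Jordan type half is $x\neq0$ with $x^2=x$, $A=A_1(x)\oplus A_0(x)\oplus A_{1/2}(x)$, $A_1(x)=\mathbb{F}x$, and fusion rules $A_1A_1\subseteq A_1$, $A_1A_0=0$, $A_0A_0\subseteq A_0$, $A_1A_{1/2},A_0A_{1/2}\subseteq A_{1/2}$, $A_{1/2}A_{1/2}\subseteq A_1\oplus A_0$. An algebra of Jordan type half is a commutative algebra generated by such axes; it has a unique Frobenius form $(\cdot,\cdot)$ (bilinear, $(uv,w)=(u,vw)$, $(x,x)=1$ for primitive axes $x$). $J=\langle\langle a,b\rangle\rangle$ is solid if every idempotent $c\in J$ with $c\neq0$, $c\neq1_J$ (the identity of $J$) is a primitive axis of Jordan type half in $A$. *)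

theory Defs
  imports Complex_Main
begin

definition comm_algebra ::
  "('k::field \<Rightarrow> 'a::ab_group_add \<Rightarrow> 'a) \<Rightarrow> ('a \<Rightarrow> 'a \<Rightarrow> 'a) \<Rightarrow> bool" where
  "comm_algebra scale mult \<longleftrightarrow>
     vector_space scale \<and>
     (\<forall>x y. mult x y = mult y x) \<and>
     (\<forall>x y z. mult (x + y) z = mult x z + mult y z) \<and>
     (\<forall>c x y. mult (scale c x) y = scale c (mult x y))"

definition eigsp ::
  "('k \<Rightarrow> 'a \<Rightarrow> 'a) \<Rightarrow> ('a \<Rightarrow> 'a \<Rightarrow> 'a) \<Rightarrow> 'a \<Rightarrow> 'k \<Rightarrow> 'a set" where
  "eigsp scale mult x l = {u. mult x u = scale l u}"

definition prim_axis_half ::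
  "('k::field \<Rightarrow> 'a::ab_group_add \<Rightarrow> 'a) \<Rightarrow> ('a \<Rightarrow> 'a \<Rightarrow> 'a) \<Rightarrow> 'a \<Rightarrow> bool" where
  "prim_axis_half scale mult x \<longleftrightarrow>
     (let A1 = eigsp scale mult x 1; A0 = eigsp scale mult x 0;
          Ah = eigsp scale mult x (1/2) in
     x \<noteq> 0 \<and> mult x x = x \<and>
     \<comment> \<open>A = A_1 (+) A_0 (+) A_1/2 (direct sum)\<close>
     (\<forall>u. \<exists>!(u1, u0, uh). u1 \<in> A1 \<and> u0 \<in> A0 \<and> uh \<in> Ah \<and> u = u1 + u0 + uh) \<and>
     A1 = range (\<lambda>c. scale c x) \<and>
     \<comment> \<open>fusion rules\<close>
     (\<forall>u\<in>A1. \<forall>v\<in>A1. mult u v \<in> A1) \<and>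
     (\<forall>u\<in>A1. \<forall>v\<in>A0. mult u v = 0) \<and>
     (\<forall>u\<in>A0. \<forall>v\<in>A0. mult u v \<in> A0) \<and>
     (\<forall>u\<in>A1. \<forall>v\<in>Ah. mult u v \<in> Ah) \<and>
     (\<forall>u\<in>A0. \<forall>v\<in>Ah. mult u v \<in> Ah) \<and>
     (\<forall>u\<in>Ah. \<forall>v\<in>Ah. \<exists>p q. p \<in> A1 \<and> q \<in> A0 \<and> mult u v = p + q))"

inductive_set gen_subalg ::
  "('k \<Rightarrow> 'a::ab_group_add \<Rightarrow> 'a) \<Rightarrow> ('a \<Rightarrow> 'a \<Rightarrow> 'a) \<Rightarrow> 'a set \<Rightarrow> 'a set"
  for scale mult S where
  gen_base: "x \<in> S \<Longrightarrow> x \<in> gen_subalg scale mult S"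
| gen_zero: "0 \<in> gen_subalg scale mult S"
| gen_add: "x \<in> gen_subalg scale mult S \<Longrightarrow> y \<in> gen_subalg scale mult S \<Longrightarrow>
    x + y \<in> gen_subalg scale mult S"
| gen_scale: "x \<in> gen_subalg scale mult S \<Longrightarrow> scale c x \<in> gen_subalg scale mult S"
| gen_mult: "x \<in> gen_subalg scale mult S \<Longrightarrow> y \<in> gen_subalg scale mult S \<Longrightarrow>
    mult x y \<in> gen_subalg scale mult S"

definition jordan_half_algebra ::
  "('k::field \<Rightarrow> 'a::ab_group_add \<Rightarrow> 'a) \<Rightarrow> ('a \<Rightarrow> 'a \<Rightarrow> 'a) \<Rightarrow> bool" where
  "jordan_half_algebra scale mult \<longleftrightarrow>
     comm_algebra scale mult \<and>
     (\<exists>X. (\<forall>x\<in>X. prim_axis_half scale mult x) \<and> gen_subalg scale mult X = UNIV)"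

definition frobenius_form ::
  "('k::field \<Rightarrow> 'a::ab_group_add \<Rightarrow> 'a) \<Rightarrow> ('a \<Rightarrow> 'a \<Rightarrow> 'a) \<Rightarrow> ('a \<Rightarrow> 'a \<Rightarrow> 'k) \<Rightarrow> bool" where
  "frobenius_form scale mult B \<longleftrightarrow>
     (\<forall>x y z. B (x + y) z = B x z + B y z) \<and>
     (\<forall>x y z. B x (y + z) = B x y + B x z) \<and>
     (\<forall>c x y. B (scale c x) y = c * B x y) \<and>
     (\<forall>c x y. B x (scale c y) = c * B x y) \<and>
     (\<forall>u v w. B (mult u v) w = B u (mult v w)) \<and>
     (\<forall>x. prim_axis_half scale mult x \<longrightarrow> B x x = 1)"

definition is_identity_of :: "('a \<Rightarrow> 'a \<Rightarrow> 'a) \<Rightarrow> 'a set \<Rightarrow> 'a \<Rightarrow> bool" where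
  "is_identity_of mult J e \<longleftrightarrow> e \<in> J \<and> (\<forall>u\<in>J. mult e u = u)"

definition solid ::
  "('k::field \<Rightarrow> 'a::ab_group_add \<Rightarrow> 'a) \<Rightarrow> ('a \<Rightarrow> 'a \<Rightarrow> 'a) \<Rightarrow> 'a \<Rightarrow> 'a \<Rightarrow> bool" where
  "solid scale mult a b \<longleftrightarrow>
     (\<forall>c \<in> gen_subalg scale mult {a, b}.
        mult c c = c \<and> c \<noteq> 0 \<and> \<not> is_identity_of mult (gen_subalg scale mult {a, b}) c
        \<longrightarrow> prim_axis_half scale mult c)"

end

theory Submission
  imports Defs "HOL-Computational_Algebra.Polynomial"
begin

text \<open>For an axis \<open>x\<close> the projections onto \<open>A\<^sub>1(x)\<close>, \<open>A\<^sub>0(x)\<close>, \<open>A\<^sub>1\<^sub>/\<^sub>2(x)\<close> are polynomials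
  in the multiplication by \<open>x\<close>, so for fixed arguments every defining property of a primitive
  axis other than \<open>x \<noteq> 0\<close> and \<open>x\<^sup>2 = x\<close> is a polynomial identity in \<open>x\<close>.

  Put \<open>n = ab\<close>. Orthogonality gives \<open>an = bn = n/2\<close> and \<open>n\<^sup>2 = 0\<close>, so \<open>J\<close> is spanned by
  \<open>a, b, n\<close>, and comparing the coefficients of \<open>a\<close> and \<open>b\<close> (read off by the Frobenius form) shows
  that the non-zero idempotents of \<open>J\<close> are \<open>a + tn\<close>, \<open>b + tn\<close> and the identity
  \<open>a + b - 2n\<close>. The Miyamoto involutions send \<open>a + tn\<close> to \<open>a - (t + 4)n\<close> under \<open>\<tau>\<^sub>b\<close> and
  this back to \<open>a + (t + 4)n\<close> under \<open>\<tau>\<^sub>a\<close>, so \<open>a + tn\<close> is an axis for all \<open>t \<in> 4\<nat>\<close>. In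
  characteristic zero this set is infinite, so the polynomial identities hold on the whole
  line, whose points are all non-zero idempotents.\<close>

locale frobenius_comm_algebra =
  fixes scale :: "'k::field_char_0 \<Rightarrow> 'a::ab_group_add \<Rightarrow> 'a"
    and mult :: "'a \<Rightarrow> 'a \<Rightarrow> 'a"
    and B :: "'a \<Rightarrow> 'a \<Rightarrow> 'k"
  assumes comm_algebra: "comm_algebra scale mult"
    and frobenius_form: "frobenius_form scale mult B"
begin

sublocale V: vector_space scale
  using comm_algebra unfolding comm_algebra_def by blast

abbreviation E :: "'a \<Rightarrow> 'k \<Rightarrow> 'a set" where
  "E \<equiv> eigsp scale mult"

lemma mem_eigsp: "u \<in> E x l \<longleftrightarrow> mult x u = scale l u"
  by (simp add: eigsp_def)

lemma mult_comm: "mult x y = mult y x"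
  using comm_algebra unfolding comm_algebra_def by blast

lemma mult_add_left: "mult (x + y) z = mult x z + mult y z"
  using comm_algebra unfolding comm_algebra_def by blast

lemma mult_scale_left: "mult (scale c x) y = scale c (mult x y)"
  using comm_algebra unfolding comm_algebra_def by blast

lemma mult_add_right: "mult z (x + y) = mult z x + mult z y"
  by (metis mult_add_left mult_comm)

lemma mult_scale_right: "mult y (scale c x) = scale c (mult y x)"
  by (metis mult_scale_left mult_comm)

lemma mult_0_left [simp]: "mult 0 y = 0"
  by (metis V.scale_zero_left mult_scale_left)

lemma mult_0_right [simp]: "mult y 0 = 0"
  by (metis mult_0_left mult_comm)

lemma mult_minus_left: "mult (- x) y = - mult x y"
  using mult_add_left[of "- x" x y] by (simp add: eq_neg_iff_add_eq_0)

lemma mult_minus_right: "mult y (- x) = - mult y x"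
  by (metis mult_minus_left mult_comm)

lemma mult_diff_left: "mult (x - y) z = mult x z - mult y z"
  unfolding diff_conv_add_uminus mult_add_left mult_minus_left ..

lemma mult_diff_right: "mult z (x - y) = mult z x - mult z y"
  unfolding diff_conv_add_uminus mult_add_right mult_minus_right ..

lemmas mult_linear = mult_add_left mult_add_right mult_scale_left mult_scale_right
  mult_minus_left mult_minus_right mult_diff_left mult_diff_right

lemma B_add_left: "B (x + y) z = B x z + B y z"
  using frobenius_form unfolding frobenius_form_def by blast

lemma B_add_right: "B x (y + z) = B x y + B x z"
  using frobenius_form unfolding frobenius_form_def by blast

lemma B_scale_left: "B (scale c x) y = c * B x y"
  using frobenius_form unfolding frobenius_form_def by blast

lemma B_scale_right: "B x (scale c y) = c * B x y"
  using frobenius_form unfolding frobenius_form_def by blast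

lemma B_assoc: "B (mult u v) w = B u (mult v w)"
  using frobenius_form unfolding frobenius_form_def by blast

lemma B_axis: "prim_axis_half scale mult x \<Longrightarrow> B x x = 1"
  using frobenius_form unfolding frobenius_form_def by blast

lemma B_0_left [simp]: "B 0 y = 0"
  using B_scale_left[of 0 0 y] by simp

lemma B_0_right [simp]: "B y 0 = 0"
  using B_scale_right[of y 0 0] by simp

lemma scale_two: "scale 2 x = x + x"
  using V.scale_left_distrib[of 1 1 x] by simp

lemma B_commute_idempotent:
  assumes "mult x x = x" shows "B y x = B x y"
proof -
  have "B y x = B (mult y x) x" by (metis assms B_assoc)
  also have "\<dots> = B x (mult x y)" by (metis B_assoc mult_comm)
  also have "\<dots> = B x y" by (metis assms B_assoc)
  finally show ?thesis .
qed

lemma B_idempotent_eigsp_eq_0: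
  assumes "mult x x = x" "u \<in> E x l" "l \<noteq> 1" shows "B x u = 0"
proof -
  have "B x u = l * B x u"
    by (metis assms(1,2) B_assoc B_scale_right mem_eigsp)
  then show ?thesis using assms(3) by (metis mult_cancel_right2)
qed

lemma eigsp_add: "u \<in> E x l \<Longrightarrow> v \<in> E x l \<Longrightarrow> u + v \<in> E x l"
  by (simp add: mem_eigsp mult_add_right V.scale_right_distrib)

lemma eigsp_scale: "u \<in> E x l \<Longrightarrow> scale c u \<in> E x l"
  by (simp add: mem_eigsp mult_scale_right V.scale_left_commute)

lemma eigsp_0 [simp]: "0 \<in> E x l"
  by (simp add: mem_eigsp)

text \<open>Lagrange interpolation in the multiplication operator of \<open>x\<close> at the eigenvalues
  \<open>1, 0, 1/2\<close>: on \<open>A\<^sub>1(x) \<oplus> A\<^sub>0(x) \<oplus> A\<^sub>1\<^sub>/\<^sub>2(x)\<close> these are the three projections.\<close>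

definition proj_one :: "'a \<Rightarrow> 'a \<Rightarrow> 'a" where
  "proj_one x u = scale 2 (mult x (mult x u)) - mult x u"

definition proj_half :: "'a \<Rightarrow> 'a \<Rightarrow> 'a" where
  "proj_half x u = scale 4 (mult x u - mult x (mult x u))"

definition proj_zero :: "'a \<Rightarrow> 'a \<Rightarrow> 'a" where
  "proj_zero x u = u - proj_one x u - proj_half x u"

lemma proj_sum: "proj_one x u + proj_zero x u + proj_half x u = u"
  by (simp add: proj_zero_def)

lemma proj_eigsp:
  assumes "u1 \<in> E x 1" "u0 \<in> E x 0" "uh \<in> E x (1/2)"
  shows "proj_one x (u1 + u0 + uh) = u1" and "proj_half x (u1 + u0 + uh) = uh"
    and "proj_zero x (u1 + u0 + uh) = u0"
proof -
  have xu: "mult x (u1 + u0 + uh) = u1 + scale (1/2) uh"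
    using assms by (simp add: mem_eigsp mult_add_right)
  have xxu: "mult x (u1 + scale (1/2) uh) = u1 + scale (1/4) uh"
    using assms by (simp add: mem_eigsp mult_add_right mult_scale_right)
  show one: "proj_one x (u1 + u0 + uh) = u1"
    unfolding proj_one_def xu xxu by (simp add: V.scale_right_distrib scale_two)
  have "scale (1/2) uh - scale (1/4) uh = scale (1/4) uh"
    using V.scale_left_diff_distrib[of "1/2" "1/4" uh] by simp
  then show half: "proj_half x (u1 + u0 + uh) = uh"
    unfolding proj_half_def xu xxu by simp
  show "proj_zero x (u1 + u0 + uh) = u0"
    unfolding proj_zero_def one half by simp
qed

lemma proj_half_eigsp_0: "u \<in> E x 0 \<Longrightarrow> proj_half x u = 0"
  using proj_eigsp(2)[of 0 x u 0] by simp

lemma proj_half_add: "proj_half x (u + v) = proj_half x u + proj_half x v"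
  by (simp add: proj_half_def mult_add_right V.scale_right_distrib V.scale_right_diff_distrib)

lemma proj_half_scale: "proj_half x (scale c u) = scale c (proj_half x u)"
  by (simp add: proj_half_def mult_scale_right V.scale_right_diff_distrib V.scale_left_commute mult.commute)

lemma proj_eigsp_self:
  shows "u \<in> E x 1 \<Longrightarrow> proj_one x u = u" and "u \<in> E x 0 \<Longrightarrow> proj_zero x u = u"
    and "u \<in> E x (1/2) \<Longrightarrow> proj_half x u = u"
  using proj_eigsp[of u x 0 0] proj_eigsp[of 0 x u 0] proj_eigsp[of 0 x 0 u] by simp_all

lemma eigsp_one_mult:
  assumes "E x 1 = range (\<lambda>c. scale c x)" "u \<in> E x 1" "v \<in> E x l"
  shows "mult u v \<in> E x l"
proof -
  obtain c where "u = scale c x" using assms(1,2) by auto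
  then have "mult u v = scale (c * l) v" using assms(3) by (simp add: mult_scale_left mem_eigsp)
  then show ?thesis using eigsp_scale[OF assms(3)] by metis
qed

lemma eigsp_one_mult_zero:
  assumes "E x 1 = range (\<lambda>c. scale c x)" "u \<in> E x 1" "v \<in> E x 0"
  shows "mult u v = 0"
  using assms by (auto simp: mem_eigsp mult_scale_left)

lemma prim_axis_halfD:
  assumes "prim_axis_half scale mult x"
  shows "x \<noteq> 0" and "mult x x = x"
    and "\<exists>u1\<in>E x 1. \<exists>u0\<in>E x 0. \<exists>uh\<in>E x (1/2). u = u1 + u0 + uh"
    and "E x 1 = range (\<lambda>c. scale c x)"
    and "u \<in> E x 0 \<Longrightarrow> v \<in> E x 0 \<Longrightarrow> mult u v \<in> E x 0"
    and "u \<in> E x 0 \<Longrightarrow> v \<in> E x (1/2) \<Longrightarrow> mult u v \<in> E x (1/2)"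
    and "u \<in> E x (1/2) \<Longrightarrow> v \<in> E x (1/2) \<Longrightarrow> \<exists>p q. p \<in> E x 1 \<and> q \<in> E x 0 \<and> mult u v = p + q"
  using assms unfolding prim_axis_half_def Let_def by (blast dest: ex1_implies_ex)+

lemma prim_axis_halfI:
  assumes "x \<noteq> 0" and "mult x x = x"
    and decomp: "\<And>u. \<exists>u1\<in>E x 1. \<exists>u0\<in>E x 0. \<exists>uh\<in>E x (1/2). u = u1 + u0 + uh"
    and one: "E x 1 = range (\<lambda>c. scale c x)"
    and "\<And>u v. u \<in> E x 0 \<Longrightarrow> v \<in> E x 0 \<Longrightarrow> mult u v \<in> E x 0"
    and "\<And>u v. u \<in> E x 0 \<Longrightarrow> v \<in> E x (1/2) \<Longrightarrow> mult u v \<in> E x (1/2)"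
    and "\<And>u v. u \<in> E x (1/2) \<Longrightarrow> v \<in> E x (1/2) \<Longrightarrow> \<exists>p q. p \<in> E x 1 \<and> q \<in> E x 0 \<and> mult u v = p + q"
  shows "prim_axis_half scale mult x"
proof -
  have unique: "\<exists>!(u1, u0, uh). u1 \<in> E x 1 \<and> u0 \<in> E x 0 \<and> uh \<in> E x (1/2) \<and> u = u1 + u0 + uh"
    for u
  proof (rule ex1I[of _ "(proj_one x u, proj_zero x u, proj_half x u)"])
    obtain u1 u0 uh where u: "u1 \<in> E x 1" "u0 \<in> E x 0" "uh \<in> E x (1/2)" "u = u1 + u0 + uh"
      using decomp by blast
    then show "case (proj_one x u, proj_zero x u, proj_half x u) of (u1, u0, uh) \<Rightarrow>
        u1 \<in> E x 1 \<and> u0 \<in> E x 0 \<and> uh \<in> E x (1/2) \<and> u = u1 + u0 + uh"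
      using proj_eigsp[OF u(1-3)] by simp
  next
    fix w assume "case w of (u1, u0, uh) \<Rightarrow>
        u1 \<in> E x 1 \<and> u0 \<in> E x 0 \<and> uh \<in> E x (1/2) \<and> u = u1 + u0 + uh"
    then obtain v1 v0 vh where "w = (v1, v0, vh)"
      and v: "v1 \<in> E x 1" "v0 \<in> E x 0" "vh \<in> E x (1/2)" "u = v1 + v0 + vh"
      by (cases w) auto
    then show "w = (proj_one x u, proj_zero x u, proj_half x u)"
      using proj_eigsp[OF v(1-3)] by simp
  qed
  show ?thesis
    unfolding prim_axis_half_def Let_def
    by (intro conjI ballI allI unique eigsp_one_mult[OF one] eigsp_one_mult_zero[OF one] assms(1,2,4-7))
qed

text \<open>Primitivity without the conditions \<open>x \<noteq> 0\<close>, \<open>x\<^sup>2 = x\<close>: for fixed \<open>u, v\<close> each clause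
  is a polynomial identity in \<open>x\<close>, so it survives Zariski closure.\<close>

definition axis_identities :: "'a \<Rightarrow> bool" where
  "axis_identities x \<longleftrightarrow>
    (\<forall>u. proj_one x u \<in> E x 1 \<and> proj_zero x u \<in> E x 0 \<and> proj_half x u \<in> E x (1/2)) \<and>
    (\<forall>u. proj_one x u = scale (B x u) x) \<and>
    (\<forall>u v. mult x (mult (proj_zero x u) (proj_zero x v)) = 0) \<and>
    (\<forall>u v. mult x (mult (proj_zero x u) (proj_half x v))
             = scale (1/2) (mult (proj_zero x u) (proj_half x v))) \<and>
    (\<forall>u v. proj_half x (mult (proj_half x u) (proj_half x v)) = 0)"

lemma axis_identities_if_prim_axis_half:
  assumes x: "prim_axis_half scale mult x" shows "axis_identities x"
proof -
  note x_facts = prim_axis_halfD[OF x]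
  have proj_mem: "proj_one x u \<in> E x 1" "proj_zero x u \<in> E x 0" "proj_half x u \<in> E x (1/2)"
    for u using x_facts(3)[of u] proj_eigsp by metis+
  have "proj_one x u = scale (B x u) x" for u
  proof -
    obtain u1 u0 uh where u: "u1 \<in> E x 1" "u0 \<in> E x 0" "uh \<in> E x (1/2)" "u = u1 + u0 + uh"
      using x_facts(3) by blast
    obtain c where c: "u1 = scale c x" using u(1) x_facts(4) by auto
    have "B x u0 = 0" "B x uh = 0"
      using B_idempotent_eigsp_eq_0[OF x_facts(2)] u(2,3) by auto
    then have "B x u = c" using u(4) c B_axis[OF x] by (simp add: B_add_right B_scale_right)
    then show ?thesis using proj_eigsp(1)[OF u(1-3)] u(4) c by simp
  qed
  moreover have "mult x (mult (proj_zero x u) (proj_zero x v)) = 0" for u v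
    using x_facts(5)[OF proj_mem(2) proj_mem(2)] by (simp add: mem_eigsp)
  moreover have "mult x (mult (proj_zero x u) (proj_half x v))
                 = scale (1/2) (mult (proj_zero x u) (proj_half x v))" for u v
    using x_facts(6)[OF proj_mem(2) proj_mem(3)] by (simp add: mem_eigsp)
  moreover have "proj_half x (mult (proj_half x u) (proj_half x v)) = 0" for u v
  proof -
    obtain p q where "p \<in> E x 1" "q \<in> E x 0" "mult (proj_half x u) (proj_half x v) = p + q"
      using x_facts(7)[OF proj_mem(3) proj_mem(3)] by blast
    then show ?thesis using proj_eigsp(2)[of p x q 0] by simp
  qed
  ultimately show ?thesis unfolding axis_identities_def using proj_mem by blast
qed

lemma prim_axis_half_if_axis_identities:
  assumes x: "x \<noteq> 0" "mult x x = x" "axis_identities x"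
  shows "prim_axis_half scale mult x"
proof -
  have proj_mem: "proj_one x u \<in> E x 1" "proj_zero x u \<in> E x 0" "proj_half x u \<in> E x (1/2)"
    and proj_one_B: "proj_one x u = scale (B x u) x"
    and fusion_00: "mult x (mult (proj_zero x u) (proj_zero x v)) = 0"
    and fusion_0h: "mult x (mult (proj_zero x u) (proj_half x v))
                    = scale (1/2) (mult (proj_zero x u) (proj_half x v))"
    and fusion_hh: "proj_half x (mult (proj_half x u) (proj_half x v)) = 0" for u v
    using x(3) unfolding axis_identities_def by blast+
  show ?thesis
  proof (rule prim_axis_halfI[OF x(1,2)])
    show "\<exists>u1\<in>E x 1. \<exists>u0\<in>E x 0. \<exists>uh\<in>E x (1/2). u = u1 + u0 + uh" for u
      using proj_mem proj_sum[of x u, symmetric] by blast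
    show "E x 1 = range (\<lambda>c. scale c x)"
    proof
      show "E x 1 \<subseteq> range (\<lambda>c. scale c x)"
      proof
        fix u assume "u \<in> E x 1"
        then have "u = scale (B x u) x" using proj_eigsp_self(1) proj_one_B by metis
        then show "u \<in> range (\<lambda>c. scale c x)" by blast
      qed
      show "range (\<lambda>c. scale c x) \<subseteq> E x 1" by (auto simp: mem_eigsp mult_scale_right x(2))
    qed
    show "mult u v \<in> E x 0" if "u \<in> E x 0" "v \<in> E x 0" for u v
      using fusion_00[of u v]
      unfolding proj_eigsp_self(2)[OF that(1)] proj_eigsp_self(2)[OF that(2)]
      by (simp add: mem_eigsp)
    show "mult u v \<in> E x (1/2)" if "u \<in> E x 0" "v \<in> E x (1/2)" for u v
      using fusion_0h[of u v]
      unfolding proj_eigsp_self(2)[OF that(1)] proj_eigsp_self(3)[OF that(2)]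
      by (simp add: mem_eigsp)
    show "\<exists>p q. p \<in> E x 1 \<and> q \<in> E x 0 \<and> mult u v = p + q" if "u \<in> E x (1/2)" "v \<in> E x (1/2)" for u v
    proof -
      have "proj_half x (mult u v) = 0"
        using fusion_hh[of u v]
        unfolding proj_eigsp_self(3)[OF that(1)] proj_eigsp_self(3)[OF that(2)] .
      then have "mult u v = proj_one x (mult u v) + proj_zero x (mult u v)"
        using proj_sum[of x "mult u v"] by simp
      then show ?thesis using proj_mem by blast
    qed
  qed
qed

definition poly_map_eval :: "(nat \<times> 'a) list \<Rightarrow> 'k \<Rightarrow> 'a" where
  "poly_map_eval L t = (\<Sum>(k, v)\<leftarrow>L. scale (t ^ k) v)"

definition poly_map :: "('k \<Rightarrow> 'a) \<Rightarrow> bool" where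
  "poly_map F \<longleftrightarrow> (\<exists>L. \<forall>t. F t = poly_map_eval L t)"

lemma poly_map_eval_Nil [simp]: "poly_map_eval [] t = 0"
  by (simp add: poly_map_eval_def)

lemma poly_map_eval_Cons [simp]: "poly_map_eval ((k, v) # L) t = scale (t ^ k) v + poly_map_eval L t"
  by (simp add: poly_map_eval_def)

lemma poly_map_eval_append [simp]: "poly_map_eval (L @ M) t = poly_map_eval L t + poly_map_eval M t"
  by (simp add: poly_map_eval_def)

lemma poly_map_const: "poly_map (\<lambda>t. c)"
  unfolding poly_map_def by (rule exI[of _ "[(0, c)]"]) simp

lemma poly_map_var_scale:
  assumes "poly_map F" shows "poly_map (\<lambda>t. scale t (F t))"
proof -
  obtain L where "\<And>t. F t = poly_map_eval L t" using assms unfolding poly_map_def by blast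
  moreover have "poly_map_eval (map (\<lambda>(k, v). (Suc k, v)) L) t = scale t (poly_map_eval L t)" for t
    by (induction L) (auto simp: V.scale_right_distrib mult.commute)
  ultimately show ?thesis unfolding poly_map_def by metis
qed

lemma poly_map_add: "poly_map F \<Longrightarrow> poly_map G \<Longrightarrow> poly_map (\<lambda>t. F t + G t)"
  unfolding poly_map_def by (metis poly_map_eval_append)

lemma poly_map_scale:
  assumes "poly_map F" shows "poly_map (\<lambda>t. scale c (F t))"
proof -
  obtain L where "\<And>t. F t = poly_map_eval L t" using assms unfolding poly_map_def by blast
  moreover have "poly_map_eval (map (\<lambda>(k, v). (k, scale c v)) L) t = scale c (poly_map_eval L t)" for t
    by (induction L) (auto simp: V.scale_right_distrib mult.commute)
  ultimately show ?thesis unfolding poly_map_def by metis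
qed

lemma poly_map_diff: "poly_map F \<Longrightarrow> poly_map G \<Longrightarrow> poly_map (\<lambda>t. F t - G t)"
  using poly_map_add[OF _ poly_map_scale, of F G "-1"] by (simp add: V.scale_minus_left)

lemma poly_map_eval_mult:
  "mult (poly_map_eval L t) (poly_map_eval M t)
   = poly_map_eval (concat (map (\<lambda>(k, v). map (\<lambda>(l, w). (k + l, mult v w)) M) L)) t"
proof (induction L)
  case (Cons kv L)
  obtain k v where kv: "kv = (k, v)" by fastforce
  have "mult (scale (t ^ k) v) (poly_map_eval M t)
        = poly_map_eval (map (\<lambda>(l, w). (k + l, mult v w)) M) t"
    by (induction M) (auto simp: mult_linear power_add V.scale_right_distrib)
  then show ?case using Cons kv by (simp add: mult_add_left)
qed simp

lemma poly_map_mult: "poly_map F \<Longrightarrow> poly_map G \<Longrightarrow> poly_map (\<lambda>t. mult (F t) (G t))"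
  unfolding poly_map_def by (metis poly_map_eval_mult)

lemma poly_map_eval_B_scale:
  "scale (B (poly_map_eval L t) u) (poly_map_eval M t)
   = poly_map_eval (concat (map (\<lambda>(k, v). map (\<lambda>(l, w). (k + l, scale (B v u) w)) M) L)) t"
proof (induction L)
  case (Cons kv L)
  obtain k v where kv: "kv = (k, v)" by fastforce
  have "scale (B (scale (t ^ k) v) u) (poly_map_eval M t)
        = poly_map_eval (map (\<lambda>(l, w). (k + l, scale (B v u) w)) M) t"
    by (induction M) (auto simp: B_scale_left V.scale_right_distrib power_add ac_simps)
  then show ?case using Cons kv by (simp add: B_add_left V.scale_left_distrib)
qed simp

lemma poly_map_B_scale: "poly_map F \<Longrightarrow> poly_map G \<Longrightarrow> poly_map (\<lambda>t. scale (B (F t) u) (G t))"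
  unfolding poly_map_def by (metis poly_map_eval_B_scale)

lemmas poly_map_intros = poly_map_const poly_map_var_scale poly_map_add poly_map_scale
  poly_map_diff poly_map_mult poly_map_B_scale

text \<open>Each coordinate of a polynomial map in a Hamel basis is a scalar polynomial, which has
  finitely many roots unless it vanishes.\<close>

lemma poly_map_zero_if_infinite_roots:
  assumes "poly_map F" and "infinite {t. F t = 0}"
  shows "F t = 0"
proof -
  obtain L where F: "\<And>t. F t = poly_map_eval L t" using assms(1) unfolding poly_map_def by blast
  obtain basis where basis: "V.independent basis" "UNIV \<subseteq> V.span basis"
    using V.basis_exists[of UNIV] by blast
  then have span: "v \<in> V.span basis" for v by blast
  define coord_poly where "coord_poly M b = (\<Sum>(k, v)\<leftarrow>M. monom (V.representation basis v b) k)"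
    for M b
  have coord: "V.representation basis (poly_map_eval M s) b = poly (coord_poly M b) s" for M s b
    by (induction M)
      (auto simp: coord_poly_def V.representation_zero V.representation_add[OF basis(1) span span]
        V.representation_scale[OF basis(1) span] poly_monom mult.commute)
  have "coord_poly L b = 0" for b
  proof (rule ccontr)
    assume "coord_poly L b \<noteq> 0"
    then have "finite {t. poly (coord_poly L b) t = 0}" by (rule poly_roots_finite)
    moreover have "{t. F t = 0} \<subseteq> {t. poly (coord_poly L b) t = 0}"
    proof
      fix t assume "t \<in> {t. F t = 0}"
      then have "V.representation basis (poly_map_eval L t) b = 0"
        by (simp add: F V.representation_zero)
      then show "t \<in> {t. poly (coord_poly L b) t = 0}" by (simp add: coord)
    qed
    ultimately show False using assms(2) finite_subset by blast
  qed
  then have "V.representation basis (F t) b = 0" for b by (simp add: F coord)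
  then show ?thesis using V.sum_nonzero_representation_eq[OF basis(1) span, of "F t"] by simp
qed

lemma poly_map_eq_if_infinite_agree:
  assumes "poly_map F" "poly_map G" and "infinite S" and "\<And>s. s \<in> S \<Longrightarrow> F s = G s"
  shows "F t = G t"
proof -
  have "S \<subseteq> {t. F t - G t = 0}" using assms(4) by auto
  then have "infinite {t. F t - G t = 0}" using assms(3) finite_subset by blast
  then show ?thesis using poly_map_zero_if_infinite_roots[OF poly_map_diff[OF assms(1,2)]] by simp
qed

lemma poly_map_proj:
  assumes "poly_map e" "poly_map F"
  shows "poly_map (\<lambda>t. proj_one (e t) (F t))" and "poly_map (\<lambda>t. proj_half (e t) (F t))"
    and "poly_map (\<lambda>t. proj_zero (e t) (F t))"
  unfolding proj_zero_def proj_one_def proj_half_def by (intro poly_map_intros assms)+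

lemma axis_identities_extend:
  assumes e: "poly_map e" and S: "infinite S" and axis: "\<And>s. s \<in> S \<Longrightarrow> axis_identities (e s)"
  shows "axis_identities (e t)"
proof -
  note agree = poly_map_eq_if_infinite_agree[OF _ _ S]
  note maps = poly_map_intros poly_map_proj e
  have identities: "mult (e s) (proj_one (e s) u) = scale 1 (proj_one (e s) u)"
    "mult (e s) (proj_zero (e s) u) = scale 0 (proj_zero (e s) u)"
    "mult (e s) (proj_half (e s) u) = scale (1/2) (proj_half (e s) u)"
    "proj_one (e s) u = scale (B (e s) u) (e s)"
    "mult (e s) (mult (proj_zero (e s) u) (proj_zero (e s) v)) = 0"
    "mult (e s) (mult (proj_zero (e s) u) (proj_half (e s) v))
      = scale (1/2) (mult (proj_zero (e s) u) (proj_half (e s) v))"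
    "proj_half (e s) (mult (proj_half (e s) u) (proj_half (e s) v)) = 0"
    if "s \<in> S" for s u v
    using axis[OF that] unfolding axis_identities_def mem_eigsp by blast+
  have "mult (e t) (proj_one (e t) u) = proj_one (e t) u" for u
    by (rule agree[of "\<lambda>t. mult (e t) (proj_one (e t) u)" "\<lambda>t. proj_one (e t) u"])
      (use identities(1) in \<open>auto intro!: maps\<close>)
  moreover have "mult (e t) (proj_zero (e t) u) = 0" for u
    by (rule agree[of "\<lambda>t. mult (e t) (proj_zero (e t) u)" "\<lambda>t. 0"])
      (use identities(2) in \<open>auto intro!: maps\<close>)
  moreover have "mult (e t) (proj_half (e t) u) = scale (1/2) (proj_half (e t) u)" for u
    by (rule agree[of "\<lambda>t. mult (e t) (proj_half (e t) u)" "\<lambda>t. scale (1/2) (proj_half (e t) u)"])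
      (auto intro!: maps identities)
  moreover have "proj_one (e t) u = scale (B (e t) u) (e t)" for u
    by (rule agree[of "\<lambda>t. proj_one (e t) u" "\<lambda>t. scale (B (e t) u) (e t)"])
      (auto intro!: maps identities)
  moreover have "mult (e t) (mult (proj_zero (e t) u) (proj_zero (e t) v)) = 0" for u v
    by (rule agree[of "\<lambda>t. mult (e t) (mult (proj_zero (e t) u) (proj_zero (e t) v))" "\<lambda>t. 0"])
      (auto intro!: maps identities)
  moreover have "mult (e t) (mult (proj_zero (e t) u) (proj_half (e t) v))
      = scale (1/2) (mult (proj_zero (e t) u) (proj_half (e t) v))" for u v
    by (rule agree[of "\<lambda>t. mult (e t) (mult (proj_zero (e t) u) (proj_half (e t) v))"
          "\<lambda>t. scale (1/2) (mult (proj_zero (e t) u) (proj_half (e t) v))"])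
      (auto intro!: maps identities)
  moreover have "proj_half (e t) (mult (proj_half (e t) u) (proj_half (e t) v)) = 0" for u v
    by (rule agree[of "\<lambda>t. proj_half (e t) (mult (proj_half (e t) u) (proj_half (e t) v))" "\<lambda>t. 0"])
      (auto intro!: maps identities)
  ultimately show ?thesis
    unfolding axis_identities_def mem_eigsp V.scale_one V.scale_zero_left by blast
qed

lemma eigsp_automorphism_image:
  assumes hom_scale: "\<And>c u. \<phi> (scale c u) = scale c (\<phi> u)"
    and hom_mult: "\<And>u v. \<phi> (mult u v) = mult (\<phi> u) (\<phi> v)" and "bij \<phi>"
  shows "E (\<phi> x) l = \<phi> ` E x l"
proof
  show "\<phi> ` E x l \<subseteq> E (\<phi> x) l"
    by (auto simp: mem_eigsp simp flip: hom_mult hom_scale)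
  show "E (\<phi> x) l \<subseteq> \<phi> ` E x l"
  proof
    fix u assume u: "u \<in> E (\<phi> x) l"
    obtain w where w: "u = \<phi> w" using \<open>bij \<phi>\<close> by (metis bij_pointE)
    have "\<phi> (mult x w) = \<phi> (scale l w)"
      using u by (simp add: w mem_eigsp hom_mult hom_scale)
    then have "w \<in> E x l" using \<open>bij \<phi>\<close> by (simp add: mem_eigsp bij_is_inj inj_eq)
    then show "u \<in> \<phi> ` E x l" using w by blast
  qed
qed

lemma prim_axis_half_automorphism_image:
  assumes hom_add: "\<And>u v. \<phi> (u + v) = \<phi> u + \<phi> v"
    and hom_scale: "\<And>c u. \<phi> (scale c u) = scale c (\<phi> u)"
    and hom_mult: "\<And>u v. \<phi> (mult u v) = mult (\<phi> u) (\<phi> v)" and bij: "bij \<phi>"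
    and x: "prim_axis_half scale mult x"
  shows "prim_axis_half scale mult (\<phi> x)"
proof -
  note x_facts = prim_axis_halfD[OF x]
  note image = eigsp_automorphism_image[OF hom_scale hom_mult bij]
  have "\<phi> 0 = 0" using hom_add[of 0 0] by simp
  then have "\<phi> x \<noteq> 0" using x_facts(1) bij by (metis bij_is_inj inj_eq)
  moreover have "mult (\<phi> x) (\<phi> x) = \<phi> x" using x_facts(2) by (simp flip: hom_mult)
  moreover have "\<exists>u1\<in>E (\<phi> x) 1. \<exists>u0\<in>E (\<phi> x) 0. \<exists>uh\<in>E (\<phi> x) (1/2). u = u1 + u0 + uh" for u
  proof -
    obtain w where w: "u = \<phi> w" using bij by (metis bij_pointE)
    obtain w1 w0 wh where "w1 \<in> E x 1" "w0 \<in> E x 0" "wh \<in> E x (1/2)" "w = w1 + w0 + wh"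
      using x_facts(3) by blast
    then show ?thesis unfolding image w by (auto simp: hom_add)
  qed
  moreover have "E (\<phi> x) 1 = range (\<lambda>c. scale c (\<phi> x))"
    unfolding image x_facts(4) by (simp add: image_image hom_scale)
  moreover have "mult u v \<in> E (\<phi> x) 0" if "u \<in> E (\<phi> x) 0" "v \<in> E (\<phi> x) 0" for u v
    using that x_facts(5) unfolding image by (auto simp flip: hom_mult)
  moreover have "mult u v \<in> E (\<phi> x) (1/2)" if "u \<in> E (\<phi> x) 0" "v \<in> E (\<phi> x) (1/2)" for u v
    using that x_facts(6) unfolding image by (auto simp flip: hom_mult)
  moreover have "\<exists>p q. p \<in> E (\<phi> x) 1 \<and> q \<in> E (\<phi> x) 0 \<and> mult u v = p + q"
    if uv: "u \<in> E (\<phi> x) (1/2)" "v \<in> E (\<phi> x) (1/2)" for u v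
  proof -
    obtain u' v' where "u = \<phi> u'" "v = \<phi> v'" "u' \<in> E x (1/2)" "v' \<in> E x (1/2)"
      using uv unfolding image by blast
    moreover obtain p q where "p \<in> E x 1" "q \<in> E x 0" "mult u' v' = p + q"
      using x_facts(7) calculation(3,4) by blast
    ultimately show ?thesis unfolding image by (auto simp flip: hom_mult simp: hom_add)
  qed
  ultimately show ?thesis by (intro prim_axis_halfI)
qed

definition miyamoto :: "'a \<Rightarrow> 'a \<Rightarrow> 'a" where
  "miyamoto x u = u - scale 2 (proj_half x u)"

lemma miyamoto_eigsp:
  assumes "u1 \<in> E x 1" "u0 \<in> E x 0" "uh \<in> E x (1/2)"
  shows "miyamoto x (u1 + u0 + uh) = u1 + u0 - uh"
  using proj_eigsp(2)[OF assms] by (simp add: miyamoto_def scale_two)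

lemma miyamoto_add: "miyamoto x (u + v) = miyamoto x u + miyamoto x v"
  by (simp add: miyamoto_def proj_half_add V.scale_right_distrib)

lemma miyamoto_scale: "miyamoto x (scale c u) = scale c (miyamoto x u)"
  by (simp add: miyamoto_def proj_half_scale V.scale_right_diff_distrib V.scale_left_commute)

lemma miyamoto_involutive:
  assumes "prim_axis_half scale mult x" shows "miyamoto x (miyamoto x u) = u"
proof -
  obtain u1 u0 uh where u: "u1 \<in> E x 1" "u0 \<in> E x 0" "uh \<in> E x (1/2)" "u = u1 + u0 + uh"
    using prim_axis_halfD(3)[OF assms] by blast
  have "- uh \<in> E x (1/2)" using eigsp_scale[OF u(3), of "-1"] by (simp add: V.scale_minus_left)
  then have "miyamoto x (u1 + u0 + - uh) = u1 + u0 - - uh" using miyamoto_eigsp u(1,2) by blast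
  then show ?thesis using miyamoto_eigsp[OF u(1-3)] u(4) by simp
qed

lemma miyamoto_mult:
  assumes x: "prim_axis_half scale mult x"
  shows "miyamoto x (mult u v) = mult (miyamoto x u) (miyamoto x v)"
proof -
  note x_facts = prim_axis_halfD[OF x]
  obtain u1 u0 uh where u: "u1 \<in> E x 1" "u0 \<in> E x 0" "uh \<in> E x (1/2)" "u = u1 + u0 + uh"
    using x_facts(3) by blast
  obtain v1 v0 vh where v: "v1 \<in> E x 1" "v0 \<in> E x 0" "vh \<in> E x (1/2)" "v = v1 + v0 + vh"
    using x_facts(3) by blast
  obtain p q where pq: "p \<in> E x 1" "q \<in> E x 0" "mult uh vh = p + q"
    using x_facts(7)[OF u(3) v(3)] by blast
  have zero: "mult u1 v0 = 0" "mult u0 v1 = 0"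
    using eigsp_one_mult_zero[OF x_facts(4)] u(1,2) v(1,2) mult_comm by metis+
  define even1 where "even1 = mult u1 v1 + p"
  define even0 where "even0 = mult u0 v0 + q"
  define odd where "odd = mult u1 vh + mult uh v1 + mult u0 vh + mult uh v0"
  have "even1 \<in> E x 1"
    unfolding even1_def using eigsp_one_mult[OF x_facts(4) u(1) v(1)] pq(1) by (rule eigsp_add)
  moreover have "even0 \<in> E x 0"
    unfolding even0_def using x_facts(5)[OF u(2) v(2)] pq(2) by (rule eigsp_add)
  moreover have "odd \<in> E x (1/2)"
    unfolding odd_def using eigsp_one_mult[OF x_facts(4)] x_facts(6) u(1-3) v(1-3)
    by (metis eigsp_add mult_comm)
  moreover have "mult u v = even1 + even0 + odd"
    unfolding u(4) v(4) even1_def even0_def odd_def by (simp add: mult_linear zero pq(3) ac_simps)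
  moreover have "mult (miyamoto x u) (miyamoto x v) = even1 + even0 - odd"
    unfolding miyamoto_eigsp[OF u(1-3), folded u(4)] miyamoto_eigsp[OF v(1-3), folded v(4)]
      even1_def even0_def odd_def
    by (simp add: mult_linear zero pq(3) algebra_simps)
  ultimately show ?thesis using miyamoto_eigsp by simp
qed

lemma prim_axis_half_miyamoto_image:
  assumes "prim_axis_half scale mult x" "prim_axis_half scale mult y"
  shows "prim_axis_half scale mult (miyamoto x y)"
  by (rule prim_axis_half_automorphism_image[OF miyamoto_add miyamoto_scale
        miyamoto_mult[OF assms(1)] involuntory_imp_bij[OF miyamoto_involutive[OF assms(1)]] assms(2)])

lemma orthogonal_axis_decomp:
  assumes x: "prim_axis_half scale mult x" and "B x y = 0"
  shows "proj_zero x y \<in> E x 0" and "mult x y \<in> E x (1/2)"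
    and "y = proj_zero x y + scale 2 (mult x y)"
proof -
  have ids: "axis_identities x" using x by (rule axis_identities_if_prim_axis_half)
  show y0: "proj_zero x y \<in> E x 0"
    using ids unfolding axis_identities_def by blast
  have yh: "proj_half x y \<in> E x (1/2)"
    using ids unfolding axis_identities_def by blast
  have "proj_one x y = 0" using ids \<open>B x y = 0\<close> unfolding axis_identities_def by simp
  then have y: "y = proj_zero x y + proj_half x y" using proj_sum[of x y] by simp
  have "mult x y = mult x (proj_zero x y) + mult x (proj_half x y)"
    by (subst y) (simp add: mult_add_right)
  also have "\<dots> = scale (1/2) (proj_half x y)" using y0 yh by (simp add: mem_eigsp)
  finally have xy: "mult x y = scale (1/2) (proj_half x y)" .
  then show "mult x y \<in> E x (1/2)" using eigsp_scale[OF yh] by simp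
  show "y = proj_zero x y + scale 2 (mult x y)" using y by (simp add: xy)
qed

end

locale orthogonal_axes = frobenius_comm_algebra scale mult B
  for scale :: "'k::field_char_0 \<Rightarrow> 'a::ab_group_add \<Rightarrow> 'a" and mult B +
  fixes a b :: 'a
  assumes axis_a: "prim_axis_half scale mult a" and axis_b: "prim_axis_half scale mult b"
    and orth: "B a b = 0"
begin

lemma idem_a: "mult a a = a" and idem_b: "mult b b = b"
  using prim_axis_halfD(2) axis_a axis_b by blast+

lemma orth_sym: "B b a = 0"
  using orth B_commute_idempotent[OF idem_a] by simp

lemma mult_a_ab: "mult a (mult a b) = scale (1/2) (mult a b)"
  using orthogonal_axis_decomp(2)[OF axis_a orth] by (simp add: mem_eigsp)

lemma mult_b_ab: "mult b (mult a b) = scale (1/2) (mult a b)"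
  using orthogonal_axis_decomp(2)[OF axis_b orth_sym] by (simp add: mem_eigsp mult_comm[of a b])

lemma B_a_ab: "B a (mult a b) = 0"
  by (metis B_assoc idem_a orth)

lemma B_b_ab: "B b (mult a b) = 0"
  by (metis B_assoc idem_b orth_sym mult_comm)

text \<open>Split \<open>b = b\<^sub>0 + 2n\<close> along \<open>a\<close>, where \<open>n = ab\<close> and \<open>b\<^sub>0 \<in> A\<^sub>0(a)\<close>. The \<open>A\<^sub>1\<^sub>/\<^sub>2(a)\<close>-parts of
  \<open>b\<^sup>2 = b\<close> give \<open>b\<^sub>0 n = n/2\<close>, and then \<open>n/2 = bn = b\<^sub>0 n + 2n\<^sup>2\<close> forces \<open>n\<^sup>2 = 0\<close>.\<close>

lemma ab_square_zero: "mult (mult a b) (mult a b) = 0"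
proof -
  note a_facts = prim_axis_halfD[OF axis_a]
  define n where "n = mult a b"
  define b0 where "b0 = proj_zero a b"
  have b0: "b0 \<in> E a 0" and n: "n \<in> E a (1/2)" and b_split: "b = b0 + scale 2 n"
    using orthogonal_axis_decomp[OF axis_a orth] unfolding b0_def n_def by blast+
  have "proj_half a (mult n n) = 0"
  proof -
    obtain p q where "p \<in> E a 1" "q \<in> E a 0" "mult n n = p + q"
      using a_facts(7)[OF n n] by blast
    then show ?thesis using proj_eigsp(2)[of p a q 0] by simp
  qed
  then have "proj_half a (mult b b) = scale 4 (mult b0 n)"
    using proj_half_eigsp_0[OF a_facts(5)[OF b0 b0]] proj_eigsp_self(3)[OF a_facts(6)[OF b0 n]]
    unfolding b_split
    by (simp add: mult_linear proj_half_add proj_half_scale mult_comm[of n b0]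
        V.scale_left_distrib[symmetric])
  moreover have "proj_half a b = scale 2 n"
    unfolding b_split using proj_half_eigsp_0[OF b0] proj_eigsp_self(3)[OF n]
    by (simp add: proj_half_add proj_half_scale)
  ultimately have "scale (1/4) (scale 4 (mult b0 n)) = scale (1/4) (scale 2 n)"
    using idem_b by simp
  then have b0n: "mult b0 n = scale (1/2) n" by simp
  have "scale (1/2) n = mult b n" using mult_b_ab unfolding n_def by simp
  also have "\<dots> = scale (1/2) n + scale 2 (mult n n)"
    unfolding b_split by (simp add: mult_add_left mult_scale_left b0n)
  finally show ?thesis unfolding n_def by simp
qed

definition comb :: "'k \<Rightarrow> 'k \<Rightarrow> 'k \<Rightarrow> 'a" where
  "comb \<alpha> \<beta> \<gamma> = scale \<alpha> a + scale \<beta> b + scale \<gamma> (mult a b)"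

lemma comb_add: "comb \<alpha> \<beta> \<gamma> + comb \<alpha>' \<beta>' \<gamma>' = comb (\<alpha> + \<alpha>') (\<beta> + \<beta>') (\<gamma> + \<gamma>')"
  by (simp add: comb_def V.scale_left_distrib ac_simps)

lemma comb_scale: "scale c (comb \<alpha> \<beta> \<gamma>) = comb (c * \<alpha>) (c * \<beta>) (c * \<gamma>)"
  by (simp add: comb_def V.scale_right_distrib)

lemma comb_diff_last: "comb \<alpha> \<beta> \<gamma> - comb \<alpha> \<beta> \<gamma>' = scale (\<gamma> - \<gamma>') (mult a b)"
  by (simp add: comb_def V.scale_left_diff_distrib)

lemma mult_a_comb: "mult a (comb \<alpha> \<beta> \<gamma>) = comb \<alpha> 0 (\<beta> + \<gamma> / 2)"
proof -
  have "mult a (comb \<alpha> \<beta> \<gamma>) = scale \<alpha> a + scale \<beta> (mult a b) + scale (\<gamma> / 2) (mult a b)"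
    by (simp add: comb_def mult_add_right mult_scale_right idem_a mult_a_ab)
  then show ?thesis by (simp add: comb_def V.scale_left_distrib add.assoc)
qed

lemma mult_b_comb: "mult b (comb \<alpha> \<beta> \<gamma>) = comb 0 \<beta> (\<alpha> + \<gamma> / 2)"
proof -
  have "mult b (comb \<alpha> \<beta> \<gamma>) = scale \<alpha> (mult a b) + scale \<beta> b + scale (\<gamma> / 2) (mult a b)"
    by (simp add: comb_def mult_add_right mult_scale_right idem_b mult_b_ab mult_comm[of b a])
  then show ?thesis by (simp add: comb_def V.scale_left_distrib add_ac)
qed

lemma mult_ab_comb: "mult (mult a b) (comb \<alpha> \<beta> \<gamma>) = comb 0 0 ((\<alpha> + \<beta>) / 2)"
proof -
  have "mult (mult a b) (comb \<alpha> \<beta> \<gamma>) = scale (\<alpha> / 2) (mult a b) + scale (\<beta> / 2) (mult a b)"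
    by (simp add: comb_def mult_add_right mult_scale_right ab_square_zero
        mult_comm[of "mult a b" a] mult_comm[of "mult a b" b] mult_a_ab mult_b_ab)
  then show ?thesis by (simp add: comb_def V.scale_left_distrib add_divide_distrib)
qed

lemma mult_comb:
  "mult (comb \<alpha> \<beta> \<gamma>) (comb \<alpha>' \<beta>' \<gamma>')
   = comb (\<alpha> * \<alpha>') (\<beta> * \<beta>') (\<alpha> * \<beta>' + \<alpha>' * \<beta> + (\<alpha> * \<gamma>' + \<alpha>' * \<gamma> + \<beta> * \<gamma>' + \<beta>' * \<gamma>) / 2)"
proof -
  have "mult (comb \<alpha> \<beta> \<gamma>) (comb \<alpha>' \<beta>' \<gamma>')
        = scale \<alpha> (mult a (comb \<alpha>' \<beta>' \<gamma>')) + scale \<beta> (mult b (comb \<alpha>' \<beta>' \<gamma>'))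
          + scale \<gamma> (mult (mult a b) (comb \<alpha>' \<beta>' \<gamma>'))"
    by (simp add: comb_def mult_add_left mult_scale_left)
  also have "\<dots> = comb (\<alpha> * \<alpha>') (\<beta> * \<beta>')
                  (\<alpha> * (\<beta>' + \<gamma>' / 2) + \<beta> * (\<alpha>' + \<gamma>' / 2) + \<gamma> * ((\<alpha>' + \<beta>') / 2))"
    by (simp add: mult_a_comb mult_b_comb mult_ab_comb comb_scale comb_add)
  also have "\<alpha> * (\<beta>' + \<gamma>' / 2) + \<beta> * (\<alpha>' + \<gamma>' / 2) + \<gamma> * ((\<alpha>' + \<beta>') / 2)
             = \<alpha> * \<beta>' + \<alpha>' * \<beta> + (\<alpha> * \<gamma>' + \<alpha>' * \<gamma> + \<beta> * \<gamma>' + \<beta>' * \<gamma>) / 2"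
    by (simp add: field_simps)
  finally show ?thesis .
qed

lemma B_a_comb: "B a (comb \<alpha> \<beta> \<gamma>) = \<alpha>"
  by (simp add: comb_def B_add_right B_scale_right B_axis[OF axis_a] orth B_a_ab)

lemma B_b_comb: "B b (comb \<alpha> \<beta> \<gamma>) = \<beta>"
  by (simp add: comb_def B_add_right B_scale_right B_axis[OF axis_b] orth_sym B_b_ab)

lemma gen_subalg_comb:
  assumes "c \<in> gen_subalg scale mult {a, b}" shows "\<exists>\<alpha> \<beta> \<gamma>. c = comb \<alpha> \<beta> \<gamma>"
  using assms
proof (induction rule: gen_subalg.induct)
  case (gen_base x)
  have "a = comb 1 0 0" "b = comb 0 1 0" by (simp_all add: comb_def)
  then show ?case using gen_base by blast
next
  case gen_zero
  have "0 = comb 0 0 0" by (simp add: comb_def)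
  then show ?case by blast
qed (metis comb_add comb_scale mult_comb)+

lemma comb_mem_gen_subalg: "comb \<alpha> \<beta> \<gamma> \<in> gen_subalg scale mult {a, b}"
  unfolding comb_def by (intro gen_add gen_scale gen_mult gen_base) simp_all

lemma mult_comb_unit: "mult (comb 1 1 (-2)) (comb \<alpha> \<beta> \<gamma>) = comb \<alpha> \<beta> \<gamma>"
  by (simp add: mult_comb field_simps)

lemma comb_idempotent_cases:
  assumes idem: "mult (comb \<alpha> \<beta> \<gamma>) (comb \<alpha> \<beta> \<gamma>) = comb \<alpha> \<beta> \<gamma>"
  shows "comb \<alpha> \<beta> \<gamma> = 0 \<or> (\<alpha> = 1 \<and> \<beta> = 0) \<or> (\<alpha> = 0 \<and> \<beta> = 1) \<or> comb \<alpha> \<beta> \<gamma> = comb 1 1 (-2)"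
proof -
  have "\<alpha> * \<alpha> = \<alpha>" using arg_cong[OF idem, of "B a"] by (simp add: mult_comb B_a_comb)
  moreover have "\<beta> * \<beta> = \<beta>" using arg_cong[OF idem, of "B b"] by (simp add: mult_comb B_b_comb)
  ultimately consider "\<alpha> = 0" "\<beta> = 0" | "\<alpha> = 1" "\<beta> = 0" | "\<alpha> = 0" "\<beta> = 1" | "\<alpha> = 1" "\<beta> = 1"
    by (metis mult_cancel_right1 mult_zero_left)
  then show ?thesis
  proof cases
    case 1
    have "comb \<alpha> \<beta> \<gamma> = mult (comb \<alpha> \<beta> \<gamma>) (comb \<alpha> \<beta> \<gamma>)" using idem by simp
    also have "\<dots> = 0" by (simp add: 1 mult_comb, simp add: comb_def)
    finally show ?thesis by simp
  next
    case 4
    then have "comb 1 1 (2 + 2 * \<gamma>) = comb 1 1 \<gamma>" using idem by (simp add: mult_comb)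
    then have "scale (2 + \<gamma>) (mult a b) = 0"
      using comb_diff_last[of 1 1 "2 + 2 * \<gamma>" \<gamma>] by (simp add: algebra_simps)
    then have "comb 1 1 \<gamma> - comb 1 1 (-2) = 0" by (simp add: comb_diff_last add.commute)
    then show ?thesis using 4 by simp
  qed simp_all
qed

lemma miyamoto_a_line: "miyamoto a (comb 1 0 s) = comb 1 0 (- s)"
proof -
  have "a \<in> E a 1" using idem_a by (simp add: mem_eigsp)
  moreover have "scale s (mult a b) \<in> E a (1/2)"
    using eigsp_scale[OF orthogonal_axis_decomp(2)[OF axis_a orth]] .
  ultimately have "miyamoto a (a + 0 + scale s (mult a b)) = a + 0 - scale s (mult a b)"
    using miyamoto_eigsp eigsp_0 by blast
  then show ?thesis by (simp add: comb_def V.scale_minus_left)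
qed

lemma miyamoto_b_line: "miyamoto b (comb 1 0 t) = comb 1 0 (- (t + 4))"
proof -
  define n where "n = mult a b"
  define a0 where "a0 = proj_zero b a"
  have a0: "a0 \<in> E b 0" and n: "n \<in> E b (1/2)" and a_eq: "a = a0 + scale 2 n"
    using orthogonal_axis_decomp[OF axis_b orth_sym] unfolding a0_def n_def mult_comm[of b a] by blast+
  have line: "comb 1 0 s = 0 + a0 + scale (2 + s) n" for s
    unfolding comb_def n_def[symmetric] by (simp add: a_eq V.scale_left_distrib add.assoc)
  have "miyamoto b (comb 1 0 t) = 0 + a0 - scale (2 + t) n"
    unfolding line using miyamoto_eigsp[OF eigsp_0 a0 eigsp_scale[OF n]] .
  also have "\<dots> = comb 1 0 (- (t + 4))"
  proof -
    have "(2::'k) + - (t + 4) = - (2 + t)" by simp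
    then show ?thesis unfolding line by (simp only: V.scale_minus_left) simp
  qed
  finally show ?thesis .
qed

lemma prim_axis_half_line_multiple_of_4: "prim_axis_half scale mult (comb 1 0 (of_nat (4 * k)))"
proof (induction k)
  case 0
  then show ?case using axis_a by (simp add: comb_def)
next
  case (Suc k)
  have "miyamoto a (miyamoto b (comb 1 0 (of_nat (4 * k)))) = comb 1 0 (of_nat (4 * Suc k))"
    by (simp add: miyamoto_a_line miyamoto_b_line)
  then show ?case
    using prim_axis_half_miyamoto_image[OF axis_a prim_axis_half_miyamoto_image[OF axis_b Suc.IH]]
    by simp
qed

text \<open>Zariski density: the line \<open>t \<mapsto> a + t ab\<close> consists of axes at \<open>t \<in> 4\<nat>\<close>, an infinite set.\<close>

lemma prim_axis_half_line: "prim_axis_half scale mult (a + scale t (mult a b))"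
proof -
  have line: "a + scale t (mult a b) = comb 1 0 t" by (simp add: comb_def)
  have "poly_map (\<lambda>t. comb 1 0 t)"
    unfolding comb_def by (intro poly_map_intros)
  moreover have "infinite (range (\<lambda>k. of_nat (4 * k) :: 'k))"
    by (rule range_inj_infinite) (simp add: inj_def)
  moreover have "axis_identities (comb 1 0 s)" if "s \<in> range (\<lambda>k. of_nat (4 * k))" for s
    using that prim_axis_half_line_multiple_of_4 axis_identities_if_prim_axis_half by blast
  ultimately have "axis_identities (comb 1 0 t)" by (rule axis_identities_extend)
  moreover have "comb 1 0 t \<noteq> 0" using B_a_comb[of 1 0 t] by auto
  moreover have "mult (comb 1 0 t) (comb 1 0 t) = comb 1 0 t" by (simp add: mult_comb)
  ultimately show ?thesis unfolding line using prim_axis_half_if_axis_identities by blast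
qed

lemma prim_axis_half_line_b: "prim_axis_half scale mult (b + scale t (mult b a))"
proof -
  interpret swapped: orthogonal_axes scale mult B b a
    by (intro orthogonal_axes.intro orthogonal_axes_axioms.intro frobenius_comm_algebra_axioms
        axis_b axis_a orth_sym)
  show ?thesis by (rule swapped.prim_axis_half_line)
qed

lemma is_identity_of_comb_unit: "is_identity_of mult (gen_subalg scale mult {a, b}) (comb 1 1 (-2))"
  unfolding is_identity_of_def using comb_mem_gen_subalg gen_subalg_comb mult_comb_unit by metis

end

theorem proposition6p7:
  fixes scale :: "'k::field_char_0 \<Rightarrow> 'a::ab_group_add \<Rightarrow> 'a"
    and mult :: "'a \<Rightarrow> 'a \<Rightarrow> 'a"
    and B :: "'a \<Rightarrow> 'a \<Rightarrow> 'k"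
    and a b :: 'a
  assumes "jordan_half_algebra scale mult"
    and "frobenius_form scale mult B"
    and "prim_axis_half scale mult a"
    and "prim_axis_half scale mult b"
    and "B a b = 0"
  shows "solid scale mult a b"
proof -
  interpret frobenius_comm_algebra scale mult B
    using assms(1,2) unfolding frobenius_comm_algebra_def jordan_half_algebra_def by blast
  interpret orthogonal_axes scale mult B a b
    by (intro orthogonal_axes.intro orthogonal_axes_axioms.intro frobenius_comm_algebra_axioms
        assms(3-5))
  show ?thesis unfolding solid_def
  proof (intro ballI impI, elim conjE)
    fix c assume c: "c \<in> gen_subalg scale mult {a, b}" and idem: "mult c c = c" and "c \<noteq> 0"
      and not_unit: "\<not> is_identity_of mult (gen_subalg scale mult {a, b}) c"
    obtain \<alpha> \<beta> \<gamma> where c_comb: "c = comb \<alpha> \<beta> \<gamma>" using gen_subalg_comb[OF c] by blast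
    have "c \<noteq> comb 1 1 (-2)" using not_unit is_identity_of_comb_unit by blast
    then consider "c = a + scale \<gamma> (mult a b)" | "c = b + scale \<gamma> (mult b a)"
      using comb_idempotent_cases[of \<alpha> \<beta> \<gamma>] idem \<open>c \<noteq> 0\<close>
      by (auto simp: c_comb comb_def mult_comm[of b a])
    then show "prim_axis_half scale mult c"
      by cases (simp_all add: prim_axis_half_line prim_axis_half_line_b)
  qed
qed

end
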